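(* Let $q\geqslant 9$ be a prime power. Then the $q$-ary Hamming code $\mathcal{H}_{2,q}$ (a $[q+1,q-1,3]_q$ MDS code) is log-concave.
   Context: The $q$-ary Hamming code $\mathcal{H}_{m,q}$ is the $\mathbb{F}_q$-linear code of length $n=(q^m-1)/(q-1)$ whose parity-check matrix has as columns one nonzero representative of each $1$-dimensional subspace of $\mathbb{F}_q^m$ (equivalently, the dual of the $q$-ary simplex code). For a linear code of length $n$, $A_i$ is the number of codewords of weight $i$; the nonzero weight distribution is the subsequence $a_0,\dots,a_N$ of $A_0,\dots,A_n$ of its nonzero values, in order; the code is log-concave if $a_i^2\geqslant a_{i-1}a_{i+1}$ for all $1\leqslant i\leqslant N-1$. *)

theory Defs
  imports Main
begin

definition nonzero_vec :: "nat \<Rightarrow> 'a::field list \<Rightarrow> bool" where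
  "nonzero_vec m v \<longleftrightarrow> length v = m \<and> (\<exists>k<m. v ! k \<noteq> 0)"

(* H (list of columns) is a parity-check matrix of the q-ary Hamming code H_{m,q}:
   its columns are nonzero vectors of F_q^m, and every 1-dimensional subspace
   (every nonzero vector up to scalar) is represented by exactly one column. *)
definition is_hamming_pcm :: "nat \<Rightarrow> 'a::{finite,field} list list \<Rightarrow> bool" where
  "is_hamming_pcm m H \<longleftrightarrow>
     (\<forall>h\<in>set H. nonzero_vec m h) \<and>
     (\<forall>v. nonzero_vec m v \<longrightarrow>
        (\<exists>!j. j < length H \<and> (\<exists>a. v = map (\<lambda>x. a * x) (H ! j))))"

definition parity_code :: "nat \<Rightarrow> 'a::field list list \<Rightarrow> 'a list set" where
  "parity_code m H = {c. length c = length H \<and>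
      (\<forall>k<m. (\<Sum>j<length H. c ! j * (H ! j) ! k) = 0)}"

definition hweight :: "'a::zero list \<Rightarrow> nat" where
  "hweight c = card {i. i < length c \<and> c ! i \<noteq> 0}"

definition weight_count :: "'a::zero list set \<Rightarrow> nat \<Rightarrow> nat" where
  "weight_count C i = card {c \<in> C. hweight c = i}"

definition nonzero_weight_distr :: "nat \<Rightarrow> 'a::zero list set \<Rightarrow> nat list" where
  "nonzero_weight_distr n C = filter (\<lambda>x. x \<noteq> 0) (map (weight_count C) [0..<Suc n])"

definition log_concave_code :: "nat \<Rightarrow> 'a::zero list set \<Rightarrow> bool" where
  "log_concave_code n C \<longleftrightarrow>
     (let a = nonzero_weight_distr n C in
       \<forall>i. 1 \<le> i \<and> i + 1 < length a \<longrightarrow> a ! (i - 1) * a ! (i + 1) \<le> (a ! i)^2)"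

end

(* The columns h_0, ..., h_q of H represent the q + 1 points of the projective line over F_q.
   A codeword with support exactly S is a family (f_j)_{j in S} of nonzero scalars with
   sum f_j h_j = 0. Sum, over all u in F_q^2, the number of families of nonzero scalars with
   sum f_j (u . h_j) = 0: each codeword is counted q^2 times and every other family q times.
   On the other hand a nonzero u is orthogonal to exactly one column, so the same sum is also
   given by the classical count of nonzero solutions of a linear equation. Comparing yields
     q^2 A_w = C(q + 1, w) E(w),   E(w) = (q - 1)^w + (-1)^w (q - 1) (q + 1 - w q),
   hence A_0 = 1, A_1 = A_2 = 0 and A_w > 0 for 3 <= w <= q + 1. Through the ratio of
   neighbouring binomial coefficients, log-concavity of A_3, ..., A_(q+1) reduces to
   w (q + 1 - w) E(w - 1) E(w + 1) <= (w + 1) (q + 2 - w) E(w)^2. For odd w this is an identity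
   with a nonnegative remainder; for even w it needs (q - 1)^w to dominate a polynomial in
   q and w, which is where q >= 9 enters. *)

theory Submission
  imports Defs "HOL-Library.FuncSet" "HOL-Library.Cardinality" "HOL.Binomial_Plus"
begin

section \<open>Nonzero solutions of a linear equation over a finite field\<close>

lemma card_field_ge_2: "CARD('a::{finite,field}) \<ge> 2"
proof -
  have "card {0::'a, 1} \<le> CARD('a)"
    by (rule card_mono) auto
  then show ?thesis
    by simp
qed

definition nonzero_solutions :: "'i set \<Rightarrow> ('i \<Rightarrow> 'a::{finite,field}) \<Rightarrow> 'a \<Rightarrow> nat" where
  "nonzero_solutions S \<alpha> t = card {f \<in> S \<rightarrow>\<^sub>E UNIV - {0}. (\<Sum>j\<in>S. f j * \<alpha> j) = t}"

lemma sum_nonzero_shifted: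
  fixes g :: "'a::{finite,field} \<Rightarrow> 'b::comm_ring_1" and c :: 'a
  assumes "c \<noteq> 0" and "\<And>s. s \<noteq> 0 \<Longrightarrow> g s = B"
  shows "(\<Sum>y\<in>UNIV - {0}. g (t - y * c)) =
     (if t = 0 then (of_nat CARD('a) - 1) * B else g 0 + (of_nat CARD('a) - 2) * B)"
proof (cases "t = 0")
  case True
  have "(\<Sum>y\<in>UNIV - {0}. g (t - y * c)) = (\<Sum>y\<in>UNIV - {0::'a}. B)"
    by (rule sum.cong) (auto simp: True assms)
  then show ?thesis
    using True by (simp add: card_Diff_singleton of_nat_diff Suc_leI)
next
  case False
  define y0 where "y0 = t / c"
  have y0: "y0 \<in> UNIV - {0}" and "t - y0 * c = 0"
    using False assms by (auto simp: y0_def)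
  then have "(\<Sum>y\<in>UNIV - {0}. g (t - y * c)) = g 0 + (\<Sum>y\<in>UNIV - {0} - {y0}. g (t - y * c))"
    by (subst sum.remove) auto
  also have "(\<Sum>y\<in>UNIV - {0} - {y0}. g (t - y * c)) = (\<Sum>y\<in>UNIV - {0} - {y0}. B)"
    using assms by (intro sum.cong) (auto simp: y0_def field_simps)
  also have "\<dots> = (of_nat CARD('a) - 2) * B"
    using y0 card_field_ge_2[where 'a='a] by (simp add: card_Diff_singleton of_nat_diff)
  finally show ?thesis
    using False by simp
qed

lemma nonzero_solutions_insert:
  fixes \<alpha> :: "'i \<Rightarrow> 'a::{finite,field}"
  assumes "finite S" "k \<notin> S"
  shows "nonzero_solutions (insert k S) \<alpha> t = (\<Sum>y\<in>UNIV - {0}. nonzero_solutions S \<alpha> (t - y * \<alpha> k))"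
proof -
  let ?T = "\<lambda>_. UNIV - {0::'a}"
  let ?A = "SIGMA y:UNIV - {0}. {g \<in> S \<rightarrow>\<^sub>E UNIV - {0}. (\<Sum>j\<in>S. g j * \<alpha> j) = t - y * \<alpha> k}"
  let ?extend = "\<lambda>(y, g). g(k := y)"
  have sum_eq: "(\<Sum>j\<in>S. (g(k := y)) j * \<alpha> j) = (\<Sum>j\<in>S. g j * \<alpha> j)" for g y
    using assms(2) by (intro sum.cong) auto
  have "{f \<in> insert k S \<rightarrow>\<^sub>E UNIV - {0}. (\<Sum>j\<in>insert k S. f j * \<alpha> j) = t} = ?extend ` ?A"
  proof (intro set_eqI iffI)
    fix f assume f: "f \<in> {f \<in> insert k S \<rightarrow>\<^sub>E UNIV - {0}. (\<Sum>j\<in>insert k S. f j * \<alpha> j) = t}"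
    have "(f k, f(k := undefined)) \<in> ?A"
      using f assms sum_eq[of f undefined] by (auto simp: PiE_iff algebra_simps)
    moreover have "f = ?extend (f k, f(k := undefined))"
      by simp
    ultimately show "f \<in> ?extend ` ?A"
      by blast
  qed (use assms sum_eq in \<open>auto simp: PiE_iff split: if_splits\<close>)
  moreover have "inj_on ?extend ?A"
    by (rule inj_on_subset[OF inj_combinator[OF assms(2), of ?T]]) auto
  moreover have "finite (S \<rightarrow>\<^sub>E UNIV - {0::'a})"
    using assms(1) by (rule finite_PiE) simp
  ultimately show ?thesis
    unfolding nonzero_solutions_def by (simp add: card_image card_SigmaI)
qed

lemma nonzero_solutions_formula:
  fixes \<alpha> :: "'i \<Rightarrow> 'a::{finite,field}"
  assumes "finite S"
  shows "int CARD('a) * int (nonzero_solutions S \<alpha> t) =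
    (int CARD('a) - 1) ^ card {j\<in>S. \<alpha> j = 0} *
    ((int CARD('a) - 1) ^ card {j\<in>S. \<alpha> j \<noteq> 0} - (-1) ^ card {j\<in>S. \<alpha> j \<noteq> 0}
     + (if t = 0 then (-1) ^ card {j\<in>S. \<alpha> j \<noteq> 0} * int CARD('a) else 0))"
  using assms
proof (induction S arbitrary: t rule: finite_induct)
  case empty
  then show ?case
    by (simp add: nonzero_solutions_def)
next
  case (insert k S)
  let ?q = "int CARD('a)"
  let ?z = "card {j\<in>S. \<alpha> j = 0}"
  let ?m = "card {j\<in>S. \<alpha> j \<noteq> 0}"
  have split: "?q * int (nonzero_solutions (insert k S) \<alpha> t) =
      (\<Sum>y\<in>UNIV - {0}. ?q * int (nonzero_solutions S \<alpha> (t - y * \<alpha> k)))"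
    using insert by (simp add: nonzero_solutions_insert sum_distrib_left)
  show ?case
  proof (cases "\<alpha> k = 0")
    case True
    have "{j\<in>insert k S. \<alpha> j = 0} = insert k {j\<in>S. \<alpha> j = 0}"
      "{j\<in>insert k S. \<alpha> j \<noteq> 0} = {j\<in>S. \<alpha> j \<noteq> 0}"
      using True by auto
    moreover have "?q * int (nonzero_solutions (insert k S) \<alpha> t) = (?q - 1) * (?q * int (nonzero_solutions S \<alpha> t))"
      using split True card_field_ge_2[where 'a='a] by (simp add: card_Diff_singleton of_nat_diff)
    ultimately show ?thesis
      using insert by (simp only: insert.IH card_insert_disjoint finite_Collect_conjI) (simp add: mult.assoc)
  next
    case False
    have "{j\<in>insert k S. \<alpha> j = 0} = {j\<in>S. \<alpha> j = 0}"
      "{j\<in>insert k S. \<alpha> j \<noteq> 0} = insert k {j\<in>S. \<alpha> j \<noteq> 0}"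
      using False by auto
    moreover have "(\<Sum>y\<in>UNIV - {0}. ?q * int (nonzero_solutions S \<alpha> (t - y * \<alpha> k))) =
        (if t = 0 then (?q - 1) * ((?q - 1) ^ ?z * ((?q - 1) ^ ?m - (-1) ^ ?m))
         else ?q * int (nonzero_solutions S \<alpha> 0) + (?q - 2) * ((?q - 1) ^ ?z * ((?q - 1) ^ ?m - (-1) ^ ?m)))"
      using False insert.IH by (subst sum_nonzero_shifted) auto
    ultimately show ?thesis
      using split insert by (simp add: algebra_simps)
  qed
qed

lemma nonzero_solutions_zero_formula:
  fixes \<alpha> :: "'i \<Rightarrow> 'a::{finite,field}"
  assumes "finite S"
  shows "int CARD('a) * int (nonzero_solutions S \<alpha> 0) =
    (int CARD('a) - 1) ^ card {j\<in>S. \<alpha> j = 0} *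
    ((int CARD('a) - 1) ^ card {j\<in>S. \<alpha> j \<noteq> 0} + (-1) ^ card {j\<in>S. \<alpha> j \<noteq> 0} * (int CARD('a) - 1))"
  using nonzero_solutions_formula[OF assms, of \<alpha> 0] by (simp add: algebra_simps)

lemma card_linear_form_zeros:
  fixes a b :: "'a::{finite,field}"
  shows "card {u :: 'a \<times> 'a. fst u * a + snd u * b = 0} = (if a = 0 \<and> b = 0 then CARD('a) * CARD('a) else CARD('a))"
proof (cases "a = 0")
  case True
  show ?thesis
  proof (cases "b = 0")
    case True
    then have "{u :: 'a \<times> 'a. fst u * a + snd u * b = 0} = UNIV \<times> UNIV"
      using \<open>a = 0\<close> by auto
    then show ?thesis
      using \<open>a = 0\<close> True by (simp add: card_cartesian_product del: UNIV_Times_UNIV)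
  next
    case False
    then have "{u :: 'a \<times> 'a. fst u * a + snd u * b = 0} = (\<lambda>x. (x, 0)) ` UNIV"
      using \<open>a = 0\<close> by auto
    then show ?thesis
      using False by (simp add: card_image inj_on_def)
  qed
next
  case False
  then have "{u :: 'a \<times> 'a. fst u * a + snd u * b = 0} = (\<lambda>y. (- (y * b) / a, y)) ` UNIV"
    by (auto simp: image_iff field_simps eq_neg_iff_add_eq_0)
  then show ?thesis
    using False by (simp add: card_image inj_on_def)
qed

section \<open>The columns of a parity-check matrix of the Hamming code\<close>

lemma card_pairs_minus_origin: "card (UNIV - {(0::'a::{finite,zero}, 0::'a)}) = CARD('a) * CARD('a) - 1"
  by (simp add: card_Diff_singleton UNIV_Times_UNIV[symmetric] card_cartesian_product del: UNIV_Times_UNIV)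

locale hamming_code_2 =
  fixes H :: "'a::{finite,field} list list"
  assumes hamming_pcm: "is_hamming_pcm 2 H"
begin

definition dot_column :: "'a \<times> 'a \<Rightarrow> nat \<Rightarrow> 'a" where
  "dot_column u j = fst u * H!j!0 + snd u * H!j!1"

lemma column_eq:
  assumes "j < length H"
  shows "H!j = [H!j!0, H!j!1]" and "H!j!0 \<noteq> 0 \<or> H!j!1 \<noteq> 0"
proof -
  have "length (H!j) = 2" and nonzero: "\<exists>k<2. H!j!k \<noteq> 0"
    using hamming_pcm assms unfolding is_hamming_pcm_def nonzero_vec_def by auto
  then show "H!j = [H!j!0, H!j!1]"
    by (auto simp: numeral_2_eq_2 length_Suc_conv)
  show "H!j!0 \<noteq> 0 \<or> H!j!1 \<noteq> 0"
    using nonzero by (auto simp: less_2_cases_iff)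
qed

lemma dot_column_eq_0_iff:
  assumes "j < length H"
  shows "dot_column u j = 0 \<longleftrightarrow> (\<exists>c. [- snd u, fst u] = map (\<lambda>x. c * x) (H!j))"
proof -
  obtain a b where ab: "H!j = [a, b]" "a \<noteq> 0 \<or> b \<noteq> 0"
    using column_eq[OF assms] by metis
  have "fst u * a + snd u * b = 0 \<longleftrightarrow> (\<exists>c. - snd u = c * a \<and> fst u = c * b)"
  proof
    assume orth: "fst u * a + snd u * b = 0"
    show "\<exists>c. - snd u = c * a \<and> fst u = c * b"
    proof (cases "a = 0")
      case True
      then show ?thesis
        using ab orth by (intro exI[of _ "fst u / b"]) auto
    next
      case False
      then show ?thesis
        using orth by (intro exI[of _ "- snd u / a"]) (auto simp: field_simps eq_neg_iff_add_eq_0)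
    qed
  next
    assume "\<exists>c. - snd u = c * a \<and> fst u = c * b"
    then obtain c where "snd u = - (c * a)" "fst u = c * b"
      by (metis minus_minus)
    then show "fst u * a + snd u * b = 0"
      by (simp add: algebra_simps)
  qed
  then show ?thesis
    using ab by (simp add: dot_column_def)
qed

lemma ex1_dot_column_eq_0:
  assumes "u \<noteq> (0, 0)"
  shows "\<exists>!j. j < length H \<and> dot_column u j = 0"
proof -
  have nonzero: "nonzero_vec 2 [- snd u, fst u]"
    using assms by (cases u) (auto simp: nonzero_vec_def less_2_cases_iff)
  have "\<forall>v. nonzero_vec 2 v \<longrightarrow> (\<exists>!j. j < length H \<and> (\<exists>c. v = map (\<lambda>x. c * x) (H!j)))"
    using hamming_pcm unfolding is_hamming_pcm_def by (rule conjunct2)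
  then have "\<exists>!j. j < length H \<and> (\<exists>c. [- snd u, fst u] = map (\<lambda>x. c * x) (H!j))"
    using nonzero by simp
  moreover have "\<And>j. j < length H \<and> dot_column u j = 0 \<longleftrightarrow>
      j < length H \<and> (\<exists>c. [- snd u, fst u] = map (\<lambda>x. c * x) (H!j))"
    by (meson dot_column_eq_0_iff)
  ultimately show ?thesis
    by simp
qed

lemma dot_column_eq_0_unique:
  assumes "u \<noteq> (0, 0)" "i < length H" "j < length H" "dot_column u i = 0" "dot_column u j = 0"
  shows "i = j"
  using ex1_dot_column_eq_0[OF assms(1)] assms(2-) by blast

lemma card_dot_column_eq_0:
  assumes "j < length H"
  shows "card {u. u \<noteq> (0, 0) \<and> dot_column u j = 0} = CARD('a) - 1"
proof -
  have "{u. u \<noteq> (0, 0) \<and> dot_column u j = 0} = {u. fst u * H!j!0 + snd u * H!j!1 = 0} - {(0, 0)}"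
    by (auto simp: dot_column_def)
  moreover have "card {u. fst u * H!j!0 + snd u * H!j!1 = 0} = CARD('a)"
    using column_eq(2)[OF assms] card_linear_form_zeros[of "H!j!0" "H!j!1"] by auto
  ultimately show ?thesis
    by (simp add: card_Diff_singleton)
qed

lemma card_dot_column_eq_0_within:
  assumes "S \<subseteq> {..<length H}"
  shows "card {u. u \<noteq> (0, 0) \<and> (\<exists>j\<in>S. dot_column u j = 0)} = card S * (CARD('a) - 1)"
proof -
  have "finite S"
    using assms finite_subset by blast
  have "{u. u \<noteq> (0, 0) \<and> (\<exists>j\<in>S. dot_column u j = 0)} = (\<Union>j\<in>S. {u. u \<noteq> (0, 0) \<and> dot_column u j = 0})"
    by auto
  moreover have "\<forall>i\<in>S. \<forall>j\<in>S. i \<noteq> j \<longrightarrow>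
      {u. u \<noteq> (0, 0) \<and> dot_column u i = 0} \<inter> {u. u \<noteq> (0, 0) \<and> dot_column u j = 0} = {}"
    using assms dot_column_eq_0_unique by blast
  then have "card (\<Union>j\<in>S. {u. u \<noteq> (0, 0) \<and> dot_column u j = 0}) =
      (\<Sum>j\<in>S. card {u. u \<noteq> (0, 0) \<and> dot_column u j = 0})"
    using \<open>finite S\<close> by (intro card_UN_disjoint) auto
  moreover have "(\<Sum>j\<in>S. card {u. u \<noteq> (0, 0) \<and> dot_column u j = 0}) = card S * (CARD('a) - 1)"
    using assms by (simp add: card_dot_column_eq_0 subset_eq)
  ultimately show ?thesis
    by simp
qed

lemma card_dot_column_neq_0_within:
  assumes "S \<subseteq> {..<length H}"
  shows "card {u. u \<noteq> (0, 0) \<and> (\<forall>j\<in>S. dot_column u j \<noteq> 0)} + card S * (CARD('a) - 1) + 1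
    = CARD('a) * CARD('a)"
proof -
  let ?U0 = "{u. u \<noteq> (0, 0) \<and> (\<forall>j\<in>S. dot_column u j \<noteq> 0)}"
  let ?U1 = "{u. u \<noteq> (0, 0) \<and> (\<exists>j\<in>S. dot_column u j = 0)}"
  have "card ?U0 + card ?U1 = card (?U0 \<union> ?U1)"
    by (rule card_Un_disjoint[symmetric]) auto
  also have "?U0 \<union> ?U1 = UNIV - {(0, 0)}"
    by auto
  finally have "card ?U0 + card ?U1 = CARD('a) * CARD('a) - 1"
    by (simp only: card_pairs_minus_origin)
  then show ?thesis
    using card_dot_column_eq_0_within[OF assms] card_field_ge_2[where 'a='a] le_square[of "CARD('a)"]
    by linarith
qed

lemma length_hamming: "length H = CARD('a) + 1"
proof -
  have "{u. u \<noteq> (0, 0) \<and> (\<exists>j\<in>{..<length H}. dot_column u j = 0)} = UNIV - {(0::'a, 0::'a)}"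
    using ex1_dot_column_eq_0 by blast
  then have "length H * (CARD('a) - 1) = CARD('a) * CARD('a) - 1"
    using card_dot_column_eq_0_within[of "{..<length H}"] by (simp add: card_pairs_minus_origin)
  also have "\<dots> = (CARD('a) + 1) * (CARD('a) - 1)"
    by (simp add: algebra_simps diff_mult_distrib2)
  finally have "length H * (CARD('a) - 1) = (CARD('a) + 1) * (CARD('a) - 1)" .
  moreover have "CARD('a) - 1 \<noteq> 0"
    using card_field_ge_2[where 'a='a] by simp
  ultimately show ?thesis
    by (simp only: mult_cancel2) blast
qed

end

section \<open>The weight distribution\<close>

(* q^2 times the number of codewords with a prescribed support of size w (support_count_formula). *)
definition scaled_support_count :: "int \<Rightarrow> nat \<Rightarrow> int" where
  "scaled_support_count q w = (q - 1) ^ w + (-1) ^ w * (q - 1) * (q + 1 - int w * q)"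

context hamming_code_2
begin

(* The number of codewords with support exactly S, counted through their restrictions to S. *)
definition support_count :: "nat set \<Rightarrow> nat" where
  "support_count S = card {f \<in> S \<rightarrow>\<^sub>E UNIV - {0::'a}.
     (\<Sum>j\<in>S. f j * H!j!0) = 0 \<and> (\<Sum>j\<in>S. f j * H!j!1) = 0}"

lemma sum_dot_column:
  "(\<Sum>j\<in>S. f j * dot_column u j) = fst u * (\<Sum>j\<in>S. f j * H!j!0) + snd u * (\<Sum>j\<in>S. f j * H!j!1)"
  by (simp add: dot_column_def sum_distrib_left sum.distrib algebra_simps)

lemma sum_nonzero_solutions_dot_column_codewords:
  assumes "finite S"
  shows "(\<Sum>u\<in>UNIV. nonzero_solutions S (dot_column u) 0) =
    CARD('a) * CARD('a) * support_count S + CARD('a) * (card (S \<rightarrow>\<^sub>E UNIV - {0::'a}) - support_count S)"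
proof -
  let ?V = "S \<rightarrow>\<^sub>E UNIV - {0::'a}"
  let ?N = "{f \<in> ?V. (\<Sum>j\<in>S. f j * H!j!0) = 0 \<and> (\<Sum>j\<in>S. f j * H!j!1) = 0}"
  let ?orth = "\<lambda>u f. fst u * (\<Sum>j\<in>S. f j * H!j!0) + snd u * (\<Sum>j\<in>S. f j * H!j!1) = 0"
  have "finite ?V"
    using assms by (rule finite_PiE) simp
  have "(\<Sum>u\<in>UNIV. nonzero_solutions S (dot_column u) 0) = (\<Sum>u\<in>UNIV. \<Sum>f\<in>?V. if ?orth u f then 1 else 0)"
    using \<open>finite ?V\<close> by (simp add: nonzero_solutions_def sum_dot_column sum.inter_filter[symmetric])
  also have "\<dots> = (\<Sum>f\<in>?V. \<Sum>u\<in>UNIV. if ?orth u f then 1 else 0)"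
    by (rule sum.swap)
  also have "\<dots> = (\<Sum>f\<in>?V. if f \<in> ?N then CARD('a) * CARD('a) else CARD('a))"
    by (intro sum.cong refl) (simp add: sum.inter_filter[symmetric] card_linear_form_zeros)
  also have "\<dots> = CARD('a) * CARD('a) * card ?N + CARD('a) * card (?V - ?N)"
  proof -
    have "?V \<inter> {f. f \<in> ?N} = ?N" and "?V \<inter> - {f. f \<in> ?N} = ?V - ?N"
      by blast+
    then show ?thesis
      using \<open>finite ?V\<close> by (simp only: sum.If_cases sum_constant) simp
  qed
  also have "card (?V - ?N) = card ?V - card ?N"
    using \<open>finite ?V\<close> by (intro card_Diff_subset) auto
  finally show ?thesis
    unfolding support_count_def .
qed

lemma sum_nonzero_solutions_dot_column_orthogonality:
  assumes "S \<subseteq> {..<length H}"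
  defines "q \<equiv> int CARD('a)" and "w \<equiv> card S"
  shows "q * (\<Sum>u\<in>UNIV. int (nonzero_solutions S (dot_column u) 0)) =
    q * (q - 1) ^ w
    + int w * (q - 1) * ((q - 1) * ((q - 1) ^ (w - 1) + (-1) ^ (w - 1) * (q - 1)))
    + (q * q - 1 - int w * (q - 1)) * ((q - 1) ^ w + (-1) ^ w * (q - 1))"
proof -
  let ?G = "\<lambda>u. q * int (nonzero_solutions S (dot_column u) 0)"
  define U1 where "U1 = {u. u \<noteq> (0, 0) \<and> (\<exists>j\<in>S. dot_column u j = 0)}"
  define U0 where "U0 = {u. u \<noteq> (0::'a, 0::'a) \<and> (\<forall>j\<in>S. dot_column u j \<noteq> 0)}"
  have "finite S"
    using assms(1) finite_subset by blast
  note G = nonzero_solutions_zero_formula[where 'a='a, OF \<open>finite S\<close>, folded q_def]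
  have G_origin: "?G (0, 0) = q * (q - 1) ^ w"
  proof -
    have "{j\<in>S. dot_column (0, 0) j = 0} = S" and "{j\<in>S. dot_column (0, 0) j \<noteq> 0} = {}"
      by (auto simp: dot_column_def)
    with G[of "dot_column (0, 0)"] show ?thesis
      unfolding w_def by (simp add: algebra_simps)
  qed
  have G_U1: "?G u = (q - 1) * ((q - 1) ^ (w - 1) + (-1) ^ (w - 1) * (q - 1))" if u: "u \<in> U1" for u
  proof -
    obtain j0 where "u \<noteq> (0, 0)" "j0 \<in> S" "dot_column u j0 = 0"
      using u by (auto simp: U1_def)
    then have "{j\<in>S. dot_column u j = 0} = {j0}" and "{j\<in>S. dot_column u j \<noteq> 0} = S - {j0}"
      using assms(1) dot_column_eq_0_unique by blast+
    with G[of "dot_column u"] show ?thesis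
      using \<open>finite S\<close> \<open>j0 \<in> S\<close> unfolding w_def by simp
  qed
  have G_U0: "?G u = (q - 1) ^ w + (-1) ^ w * (q - 1)" if "u \<in> U0" for u
  proof -
    have "{j\<in>S. dot_column u j = 0} = {}" and "{j\<in>S. dot_column u j \<noteq> 0} = S"
      using that by (auto simp: U0_def)
    with G[of "dot_column u"] show ?thesis
      unfolding w_def by simp
  qed
  have card_U1: "int (card U1) = int w * (q - 1)"
    using card_dot_column_eq_0_within[OF assms(1)] card_field_ge_2[where 'a='a]
    by (simp add: U1_def w_def q_def of_nat_diff)
  have card_U0: "int (card U0) = q * q - 1 - int w * (q - 1)"
    using arg_cong[where f = int, OF card_dot_column_neq_0_within[OF assms(1)]] card_field_ge_2[where 'a='a]
    by (simp add: U0_def w_def q_def of_nat_diff)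
  have disjoint: "U1 \<inter> U0 = {}"
    by (auto simp: U1_def U0_def)
  have univ: "insert (0, 0) (U1 \<union> U0) = UNIV" and "(0, 0) \<notin> U1 \<union> U0"
    by (auto simp: U1_def U0_def)
  have "(\<Sum>u\<in>UNIV. ?G u) = (\<Sum>u\<in>insert (0, 0) (U1 \<union> U0). ?G u)"
    by (simp only: univ)
  also have "\<dots> = ?G (0, 0) + (\<Sum>u\<in>U1. ?G u) + (\<Sum>u\<in>U0. ?G u)"
    using disjoint \<open>(0, 0) \<notin> U1 \<union> U0\<close> by (simp add: sum.union_disjoint)
  also have "\<dots> = q * (q - 1) ^ w + int (card U1) * ((q - 1) * ((q - 1) ^ (w - 1) + (-1) ^ (w - 1) * (q - 1)))
      + int (card U0) * ((q - 1) ^ w + (-1) ^ w * (q - 1))"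
    by (simp add: G_origin G_U1 G_U0)
  finally show ?thesis
    by (simp add: card_U1 card_U0 sum_distrib_left mult.assoc)
qed

lemma support_count_formula:
  assumes "S \<subseteq> {..<length H}"
  shows "int CARD('a) ^ 2 * int (support_count S) = scaled_support_count (int CARD('a)) (card S)"
proof -
  define q where "q = int CARD('a)"
  define w where "w = card S"
  define N where "N = int (support_count S)"
  have "finite S"
    using assms finite_subset by blast
  have q: "q \<ge> 2"
    using card_field_ge_2[where 'a='a] by (simp add: q_def)
  have card_V: "card (S \<rightarrow>\<^sub>E UNIV - {0::'a}) = (CARD('a) - 1) ^ w"
    using \<open>finite S\<close> by (simp add: card_PiE card_Diff_singleton w_def)
  have "support_count S \<le> card (S \<rightarrow>\<^sub>E UNIV - {0::'a})"
    unfolding support_count_def using \<open>finite S\<close> by (intro card_mono finite_PiE) auto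
  then have "int (\<Sum>u\<in>UNIV. nonzero_solutions S (dot_column u) 0) = q * q * N + q * ((q - 1) ^ w - N)"
    using q card_V by (simp add: sum_nonzero_solutions_dot_column_codewords[OF \<open>finite S\<close>]
        q_def N_def of_nat_diff)
  then have counted_twice: "q * (q * q * N + q * ((q - 1) ^ w - N)) =
      q * (q - 1) ^ w
      + int w * (q - 1) * ((q - 1) * ((q - 1) ^ (w - 1) + (-1) ^ (w - 1) * (q - 1)))
      + (q * q - 1 - int w * (q - 1)) * ((q - 1) ^ w + (-1) ^ w * (q - 1))"
    using sum_nonzero_solutions_dot_column_orthogonality[OF assms] by (simp add: q_def w_def)
  have "(q - 1) * (q * q * N - scaled_support_count q w) = 0"
  proof (cases w)
    case 0
    with counted_twice show ?thesis
      by (simp add: scaled_support_count_def algebra_simps)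
  next
    case (Suc v)
    with counted_twice show ?thesis
      by (simp add: scaled_support_count_def algebra_simps)
  qed
  with q show ?thesis
    by (simp add: q_def w_def N_def power2_eq_square)
qed

lemma finite_parity_code: "finite (parity_code 2 H)"
proof (rule finite_subset)
  show "parity_code 2 H \<subseteq> {xs. set xs \<subseteq> UNIV \<and> length xs = length H}"
    by (auto simp: parity_code_def)
qed (rule finite_lists_length_eq, simp)

lemma parity_code_iff_supported:
  assumes "S \<subseteq> {..<length H}" "length c = length H" "\<And>j. j < length H \<Longrightarrow> j \<notin> S \<Longrightarrow> c!j = 0"
  shows "c \<in> parity_code 2 H \<longleftrightarrow> (\<Sum>j\<in>S. c!j * H!j!0) = 0 \<and> (\<Sum>j\<in>S. c!j * H!j!1) = 0"
proof -
  have "(\<Sum>j<length H. c!j * H!j!k) = (\<Sum>j\<in>S. c!j * H!j!k)" for k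
    using assms by (intro sum.mono_neutral_right) auto
  then show ?thesis
    using assms(2) by (auto simp: parity_code_def numeral_2_eq_2 All_less_Suc)
qed

lemma card_codewords_with_support:
  assumes S: "S \<subseteq> {..<length H}"
  shows "card {c \<in> parity_code 2 H. {i. i < length c \<and> c!i \<noteq> 0} = S} = support_count S"
proof -
  let ?B = "{f \<in> S \<rightarrow>\<^sub>E UNIV - {0::'a}. (\<Sum>j\<in>S. f j * H!j!0) = 0 \<and> (\<Sum>j\<in>S. f j * H!j!1) = 0}"
  let ?A = "{c \<in> parity_code 2 H. {i. i < length c \<and> c!i \<noteq> 0} = S}"
  let ?extend = "\<lambda>f. map (\<lambda>j. if j \<in> S then f j else 0) [0..<length H]"
  let ?restrict = "\<lambda>c. restrict (\<lambda>j. c!j) S"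
  have "bij_betw ?extend ?B ?A"
  proof (rule bij_betw_byWitness[where f' = ?restrict])
    show "\<forall>f\<in>?B. ?restrict (?extend f) = f"
      using S by (auto simp: PiE_iff extensional_def subset_eq)
    show "\<forall>c\<in>?A. ?extend (?restrict c) = c"
      by (auto simp: parity_code_def intro!: nth_equalityI)
    show "?extend ` ?B \<subseteq> ?A"
    proof (rule image_subsetI)
      fix f assume f: "f \<in> ?B"
      have "(\<Sum>j\<in>S. ?extend f ! j * H!j!k) = (\<Sum>j\<in>S. f j * H!j!k)" for k
        using S by (intro sum.cong) auto
      then have "?extend f \<in> parity_code 2 H"
        using f by (subst parity_code_iff_supported[OF S]) auto
      moreover have "{i. i < length (?extend f) \<and> ?extend f ! i \<noteq> 0} = S"
        using f S by (auto simp: PiE_iff split: if_splits)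
      ultimately show "?extend f \<in> ?A"
        by blast
    qed
    show "?restrict ` ?A \<subseteq> ?B"
    proof (rule image_subsetI)
      fix c assume "c \<in> ?A"
      then have c: "c \<in> parity_code 2 H" and supp: "S = {i. i < length c \<and> c!i \<noteq> 0}"
        by auto
      have "length c = length H"
        using c by (simp add: parity_code_def)
      then have "(\<Sum>j\<in>S. c!j * H!j!0) = 0 \<and> (\<Sum>j\<in>S. c!j * H!j!1) = 0"
        using parity_code_iff_supported[OF S] c supp by auto
      then show "?restrict c \<in> ?B"
        using supp by (auto simp: PiE_iff)
    qed
  qed
  then show ?thesis
    unfolding support_count_def by (simp add: bij_betw_same_card)
qed

lemma weight_count_eq_sum_support_count:
  "weight_count (parity_code 2 H) w = (\<Sum>S | S \<subseteq> {..<length H} \<and> card S = w. support_count S)"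
proof -
  let ?supp = "\<lambda>c. {i. i < length c \<and> c!i \<noteq> 0}"
  let ?Ss = "{S. S \<subseteq> {..<length H} \<and> card S = w}"
  have "{c \<in> parity_code 2 H. hweight c = w} = (\<Union>S\<in>?Ss. {c \<in> parity_code 2 H. ?supp c = S})"
    by (auto simp: hweight_def parity_code_def)
  then have "weight_count (parity_code 2 H) w = card (\<Union>S\<in>?Ss. {c \<in> parity_code 2 H. ?supp c = S})"
    by (simp add: weight_count_def)
  also have "\<dots> = (\<Sum>S\<in>?Ss. card {c \<in> parity_code 2 H. ?supp c = S})"
    using finite_parity_code by (intro card_UN_disjoint) auto
  also have "\<dots> = (\<Sum>S\<in>?Ss. support_count S)"
    by (intro sum.cong) (auto simp: card_codewords_with_support)
  finally show ?thesis .
qed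

lemma weight_count_formula:
  "int (weight_count (parity_code 2 H) w) * int CARD('a) ^ 2 =
    int ((CARD('a) + 1) choose w) * scaled_support_count (int CARD('a)) w"
proof -
  have "int (weight_count (parity_code 2 H) w) * int CARD('a) ^ 2 =
      int CARD('a) ^ 2 * int (weight_count (parity_code 2 H) w)"
    by (rule mult.commute)
  also have "\<dots> = (\<Sum>S | S \<subseteq> {..<length H} \<and> card S = w. int CARD('a) ^ 2 * int (support_count S))"
    by (simp add: weight_count_eq_sum_support_count sum_distrib_left)
  also have "\<dots> = (\<Sum>S | S \<subseteq> {..<length H} \<and> card S = w. scaled_support_count (int CARD('a)) w)"
    by (intro sum.cong) (auto simp: support_count_formula)
  finally show ?thesis
    by (simp add: n_subsets length_hamming)
qed

end

section \<open>Log-concavity\<close>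

lemma Suc_times_binomial_diff: "Suc k * (n choose Suc k) = (n - k) * (n choose k)"
  using binomial_absorption[of k n] binomial_absorb_comp[of n k] by simp

lemma binomial_neighbours_ratio:
  assumes "0 < w" "w \<le> n"
  shows "int (n choose (w - 1)) * int (n choose (w + 1)) * ((int n + 1 - int w) * (int w + 1))
    = int (n choose w) ^ 2 * (int w * (int n - int w))"
proof -
  have "(n + 1 - w) * (n choose (w - 1)) = w * (n choose w)"
    using Suc_times_binomial_diff[of "w - 1" n] assms by (simp add: Suc_diff_le)
  moreover have "(w + 1) * (n choose (w + 1)) = (n - w) * (n choose w)"
    using Suc_times_binomial_diff[of w n] by simp
  ultimately have "int ((n + 1 - w) * (n choose (w - 1))) * int ((w + 1) * (n choose (w + 1)))
      = int (w * (n choose w)) * int ((n - w) * (n choose w))"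
    by simp
  moreover have "int (n + 1 - w) = int n + 1 - int w" "int (n - w) = int n - int w"
    using assms by simp_all
  ultimately show ?thesis
    by (simp only: of_nat_mult of_nat_add of_nat_1 power2_eq_square ac_simps)
qed

lemma mult_less_power_pred:
  fixes Q :: int
  assumes Q: "Q \<ge> 4" and k: "k \<ge> 2"
  shows "int k * Q < (Q - 1) ^ k"
  using k
proof (induction k rule: dec_induct)
  case base
  have "4 * Q \<le> Q * Q"
    using Q by (intro mult_right_mono) auto
  then show ?case
    by (simp add: power2_eq_square algebra_simps)
next
  case (step k)
  have "int (Suc k) * Q \<le> (Q - 1) * (int k * Q)"
  proof -
    have "int k * Q * 3 \<le> int k * Q * (Q - 1)"
      using Q by (intro mult_left_mono) auto
    moreover have "Q \<le> int k * Q"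
      using step(1) Q by simp
    moreover have "int (Suc k) * Q = int k * Q + Q" and "(Q - 1) * (int k * Q) = int k * Q * (Q - 1)"
      by (simp_all add: algebra_simps)
    ultimately show ?thesis
      using Q by linarith
  qed
  also have "\<dots> < (Q - 1) * (Q - 1) ^ k"
    using step Q by (intro mult_strict_left_mono) auto
  finally show ?case
    by simp
qed

lemma scaled_support_count_pos:
  fixes Q :: int
  assumes Q: "Q \<ge> 4" and w: "w \<ge> 3"
  shows "scaled_support_count Q w > 0"
proof -
  define v where "v = w - 1"
  have w_eq: "w = Suc v" and v: "v \<ge> 2"
    using w by (simp_all add: v_def)
  define f where "f = int v * Q - 1"
  have "Q \<le> int v * Q"
    using Q v mult_right_mono[of 1 "int v" Q] by simp
  then have f: "0 \<le> f" "f < (Q - 1) ^ v"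
    using mult_less_power_pred[OF Q v] Q by (simp_all add: f_def)
  have "scaled_support_count Q w = (Q - 1) * ((Q - 1) ^ v + (-1) ^ v * f)"
    by (simp add: scaled_support_count_def w_eq f_def algebra_simps)
  moreover have "(Q - 1) ^ v + (-1) ^ v * f > 0"
    using f by (cases "even v") auto
  ultimately show ?thesis
    using Q by simp
qed

lemma sextic_ge_cubic:
  fixes x :: int
  assumes "x \<ge> 8"
  shows "72 * (x + 1) ^ 3 \<le> x ^ 6"
proof -
  define t where "t = x - 8"
  have "t \<ge> 0" and x: "x = t + 8"
    using assms by (simp_all add: t_def)
  have "x ^ 6 - 72 * (x + 1) ^ 3 = 209656 + 179112 * t + 59496 * t^2 + 10168 * t^3 + 960 * t^4 + 48 * t^5 + t^6"
    unfolding x by (simp add: algebra_simps power_def eval_nat_numeral)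
  with \<open>t \<ge> 0\<close> show ?thesis
    by (smt (verit) zero_le_power)
qed

lemma power_pred_ge_square_cube:
  fixes Q :: int
  assumes Q: "Q \<ge> 9" and w: "w \<ge> 6"
  shows "2 * int w ^ 2 * Q ^ 3 \<le> (Q - 1) ^ w"
  using w
proof (induction w rule: dec_induct)
  case base
  have "72 * Q ^ 3 \<le> (Q - 1) ^ 6"
    using sextic_ge_cubic[of "Q - 1"] Q by simp
  then show ?case
    by simp
next
  case (step v)
  have "int v * int v \<ge> 6 * int v"
    using step(1) by (intro mult_right_mono) auto
  moreover have "int (Suc v) ^ 2 = int v * int v + 2 * int v + 1" and "8 * int v ^ 2 = 8 * (int v * int v)"
    by (simp_all add: power2_eq_square algebra_simps)
  ultimately have "int (Suc v) ^ 2 \<le> 8 * int v ^ 2"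
    using step(1) by linarith
  then have "2 * int (Suc v) ^ 2 * Q ^ 3 \<le> 8 * (2 * int v ^ 2 * Q ^ 3)"
    using Q by (simp add: mult_right_mono)
  also have "\<dots> \<le> (Q - 1) * (Q - 1) ^ v"
    using Q step by (intro mult_mono) auto
  finally show ?case
    by simp
qed

lemma even_weight_bound_4:
  fixes Q :: int
  assumes "Q \<ge> 9"
  shows "2 * (Q - 1) * (5 * (Q - 2)) * (3 * Q - 1) + 4 * (Q - 3) * (Q - 1)^2 * (2 * Q - 1)
      + 4 * (Q - 3) * (4 * Q - 1) \<le> (Q + 2) * (Q - 1) ^ 4"
proof -
  define t where "t = Q - 9"
  have "t \<ge> 0" and Q: "Q = t + 9"
    using assms by (simp_all add: t_def)
  have "(Q + 2) * (Q - 1) ^ 4 - (2 * (Q - 1) * (5 * (Q - 2)) * (3 * Q - 1)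
      + 4 * (Q - 3) * (Q - 1)^2 * (2 * Q - 1) + 4 * (Q - 3) * (4 * Q - 1))
      = 3544 + 6856 * t + 2770 * t^2 + 462 * t^3 + 35 * t^4 + t^5"
    unfolding Q by (simp add: algebra_simps power_def eval_nat_numeral)
  moreover have "0 \<le> 3544 + 6856 * t + 2770 * t^2 + 462 * t^3 + 35 * t^4 + t^5"
    using \<open>t \<ge> 0\<close> by simp
  ultimately show ?thesis
    by linarith
qed

lemma even_weight_terms_le:
  fixes Q W :: int
  assumes Q: "Q \<ge> 9" and W: "W \<ge> 6" "W \<le> Q"
  shows "2 * (Q - 1) * ((W + 1) * (Q + 2 - W)) * ((W - 1) * Q - 1)
      + W * (Q + 1 - W) * (Q - 1)^2 * ((W - 2) * Q - 1) + W * (Q + 1 - W) * (W * Q - 1)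
    \<le> W^2 * Q^2 * (Q^2 + 4 * Q + 2)"
proof -
  have R: "0 \<le> W * (Q + 1 - W)" "W * (Q + 1 - W) \<le> W * Q"
    using Q W by (auto intro: mult_left_mono)
  have R': "0 \<le> (W + 1) * (Q + 2 - W)" "(W + 1) * (Q + 2 - W) \<le> 2 * W * Q"
    using Q W by (auto simp flip: mult.assoc intro: mult_mono)
  have "Q * 6 \<le> Q * W"
    using Q W by (intro mult_left_mono) auto
  moreover have linear: "(W - 1) * Q - 1 = Q * W - Q - 1" "(W - 2) * Q - 1 = Q * W - 2 * Q - 1"
    "W * Q = Q * W" "2 * W * Q = 2 * (Q * W)"
    by (simp_all add: algebra_simps)
  ultimately have f: "0 \<le> (W - 1) * Q - 1" "(W - 1) * Q - 1 \<le> W * Q"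
    "0 \<le> (W - 2) * Q - 1" "(W - 2) * Q - 1 \<le> W * Q" "0 \<le> W * Q - 1" "W * Q - 1 \<le> 2 * W * Q"
    using Q unfolding linear by linarith+
  have x: "0 \<le> (Q - 1)^2" "(Q - 1)^2 \<le> Q^2"
    using Q by (auto intro: power_mono)
  have "2 * (Q - 1) * ((W + 1) * (Q + 2 - W)) \<le> 2 * Q * (2 * W * Q)"
    using Q W R' by (intro mult_mono) auto
  then have t1: "2 * (Q - 1) * ((W + 1) * (Q + 2 - W)) * ((W - 1) * Q - 1) \<le> 2 * Q * (2 * W * Q) * (W * Q)"
    using f Q W by (intro mult_mono) auto
  have "W * (Q + 1 - W) * (Q - 1)^2 \<le> (W * Q) * Q^2"
    using Q W R x by (intro mult_mono) auto
  then have t2: "W * (Q + 1 - W) * (Q - 1)^2 * ((W - 2) * Q - 1) \<le> (W * Q) * Q^2 * (W * Q)"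
    using Q W f by (intro mult_mono) auto
  have t3: "W * (Q + 1 - W) * (W * Q - 1) \<le> (W * Q) * (2 * W * Q)"
    using Q W R f by (intro mult_mono) auto
  have "2 * Q * (2 * W * Q) * (W * Q) + (W * Q) * Q^2 * (W * Q) + (W * Q) * (2 * W * Q)
      = W^2 * Q^2 * (Q^2 + 4 * Q + 2)"
    by (simp add: algebra_simps power2_eq_square)
  with t1 t2 t3 show ?thesis
    by linarith
qed

lemma even_weight_bound_ge_6:
  fixes Q W :: int
  assumes Q: "Q \<ge> 9" and W: "W \<ge> 6" "W \<le> Q" and X: "2 * W ^ 2 * Q ^ 3 \<le> X"
  shows "2 * (Q - 1) * ((W + 1) * (Q + 2 - W)) * ((W - 1) * Q - 1)
      + W * (Q + 1 - W) * (Q - 1)^2 * ((W - 2) * Q - 1) + W * (Q + 1 - W) * (W * Q - 1)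
    \<le> (Q + 2) * X"
proof -
  have "9 * Q \<le> Q * Q"
    using Q by (intro mult_right_mono) auto
  then have "Q^2 + 4 * Q + 2 \<le> 2 * Q^2"
    using Q unfolding power2_eq_square by linarith
  then have "W^2 * Q^2 * (Q^2 + 4 * Q + 2) \<le> W^2 * Q^2 * (2 * Q^2)"
    by (intro mult_left_mono) auto
  also have "\<dots> = Q * (2 * W ^ 2 * Q ^ 3)"
    by (simp add: algebra_simps power2_eq_square power3_eq_cube)
  also have "\<dots> \<le> (Q + 2) * X"
    using Q X by (intro mult_mono) auto
  finally show ?thesis
    using even_weight_terms_le[OF Q W] by linarith
qed

lemma even_weight_bound:
  fixes Q :: int
  assumes Q: "Q \<ge> 9" and w: "w = 4 \<or> w \<ge> 6" "int w \<le> Q"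
  shows "2 * (Q - 1) * ((int w + 1) * (Q + 2 - int w)) * ((int w - 1) * Q - 1)
      + int w * (Q + 1 - int w) * (Q - 1)^2 * ((int w - 2) * Q - 1) + int w * (Q + 1 - int w) * (int w * Q - 1)
    \<le> (Q + 2) * (Q - 1) ^ w"
proof (cases "w = 4")
  case True
  then show ?thesis
    using even_weight_bound_4[OF Q] by (simp add: algebra_simps)
next
  case False
  then have "w \<ge> 6"
    using w by auto
  then show ?thesis
    using even_weight_bound_ge_6[OF Q _ w(2) power_pred_ge_square_cube[OF Q]] by simp
qed

lemma scaled_support_count_consecutive:
  fixes Q :: int and v :: nat
  defines "x \<equiv> Q - 1" and "f \<equiv> (int v - 1) * Q - 1"
  shows "scaled_support_count Q v = x ^ v - (-1) ^ v * x * f"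
    and "scaled_support_count Q (Suc v) = x * x ^ v + (-1) ^ v * x * (f + Q)"
    and "scaled_support_count Q (Suc (Suc v)) = x^2 * x ^ v - (-1) ^ v * x * (f + 2 * Q)"
  by (simp_all add: scaled_support_count_def x_def f_def algebra_simps power2_eq_square)

(* The two sign cases of scaled_support_count_log_concave, in the variables of
   scaled_support_count_consecutive with P = x ^ v and R = w (Q + 1 - w). *)

lemma log_concave_step_odd_weight:
  fixes x P f R R' Q :: int
  assumes "x \<ge> 0" "P \<ge> 0" "f \<ge> 0" "Q \<ge> 0" and R: "R \<ge> 0" "R \<le> R'"
  shows "R * ((P - x * f) * (x^2 * P - x * (f + 2 * Q))) \<le> R' * (x * P + x * (f + Q))^2"
proof -
  have "(x * P + x * (f + Q))^2 - (P - x * f) * (x^2 * P - x * (f + 2 * Q))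
      = 2 * x^2 * P * (f + Q) + x * P * (f + 2 * Q) + x^3 * P * f + x^2 * Q^2"
    by (simp add: algebra_simps power2_eq_square power3_eq_cube)
  moreover have "0 \<le> 2 * x^2 * P * (f + Q) + x * P * (f + 2 * Q) + x^3 * P * f + x^2 * Q^2"
    using assms by simp
  ultimately have "(P - x * f) * (x^2 * P - x * (f + 2 * Q)) \<le> (x * P + x * (f + Q))^2"
    by linarith
  then have "R * ((P - x * f) * (x^2 * P - x * (f + 2 * Q))) \<le> R * (x * P + x * (f + Q))^2"
    using R(1) by (rule mult_left_mono)
  also have "\<dots> \<le> R' * (x * P + x * (f + Q))^2"
    using R by (intro mult_right_mono) auto
  finally show ?thesis .
qed

lemma log_concave_step_even_weight:
  fixes x P f R Q :: int
  assumes "x \<ge> 0" "P \<ge> 0" "R \<ge> 0" "Q \<ge> 0"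
    and bound: "2 * x * (R + Q + 2) * (f + Q) + R * x^2 * f + R * (f + 2 * Q) \<le> (Q + 2) * (x * P)"
  shows "R * ((P + x * f) * (x^2 * P + x * (f + 2 * Q))) \<le> (R + Q + 2) * (x * P - x * (f + Q))^2"
proof -
  have "(R + Q + 2) * (x * P - x * (f + Q))^2 - R * ((P + x * f) * (x^2 * P + x * (f + 2 * Q)))
      = (x * P) * ((Q + 2) * (x * P) - (2 * x * (R + Q + 2) * (f + Q) + R * x^2 * f + R * (f + 2 * Q)))
        + x^2 * (R * Q^2 + (Q + 2) * (f + Q)^2)"
    by (simp add: algebra_simps power2_eq_square)
  moreover have "0 \<le> (x * P) * ((Q + 2) * (x * P) - (2 * x * (R + Q + 2) * (f + Q) + R * x^2 * f + R * (f + 2 * Q)))"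
    using assms by simp
  moreover have "0 \<le> x^2 * (R * Q^2 + (Q + 2) * (f + Q)^2)"
    using assms by simp
  ultimately show ?thesis
    by linarith
qed

lemma scaled_support_count_log_concave:
  fixes Q :: int
  assumes Q: "Q \<ge> 9" and w: "w \<ge> 4" "int w \<le> Q"
  shows "int w * (Q + 1 - int w) * (scaled_support_count Q (w - 1) * scaled_support_count Q (w + 1))
    \<le> (int w + 1) * (Q + 2 - int w) * (scaled_support_count Q w)^2"
proof -
  define v where "v = w - 1"
  define x where "x = Q - 1"
  define f where "f = (int v - 1) * Q - 1"
  define R where "R = int w * (Q + 1 - int w)"
  have w_eq: "w = Suc v"
    using w by (simp add: v_def)
  have E: "scaled_support_count Q (w - 1) = x ^ v - (-1) ^ v * x * f"
    "scaled_support_count Q w = x * x ^ v + (-1) ^ v * x * (f + Q)"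
    "scaled_support_count Q (w + 1) = x^2 * x ^ v - (-1) ^ v * x * (f + 2 * Q)"
    using scaled_support_count_consecutive[of Q v] by (simp_all add: w_eq x_def f_def)
  have R': "(int w + 1) * (Q + 2 - int w) = R + Q + 2"
    by (simp add: R_def algebra_simps)
  have "x \<ge> 0" "x ^ v \<ge> 0" "R \<ge> 0"
    using Q w by (simp_all add: x_def R_def)
  have "Q * 3 \<le> Q * int v"
    using Q w by (intro mult_left_mono) (auto simp: v_def)
  moreover have "f = Q * int v - Q - 1"
    by (simp add: f_def algebra_simps)
  ultimately have "f \<ge> 0"
    using Q by linarith
  show ?thesis
  proof (cases "even v")
    case True
    have "R * ((x ^ v - x * f) * (x^2 * x ^ v - x * (f + 2 * Q))) \<le> (R + Q + 2) * (x * x ^ v + x * (f + Q))^2"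
      using \<open>x \<ge> 0\<close> \<open>x ^ v \<ge> 0\<close> \<open>f \<ge> 0\<close> \<open>R \<ge> 0\<close> Q by (intro log_concave_step_odd_weight) auto
    then show ?thesis
      using True unfolding E R' R_def[symmetric] by simp
  next
    case False
    then have "w \<noteq> 5"
      by (auto simp: w_eq)
    with w have "w = 4 \<or> w \<ge> 6"
      by auto
    then have "2 * x * (R + Q + 2) * (f + Q) + R * x^2 * f + R * (f + 2 * Q) \<le> (Q + 2) * (x * x ^ v)"
      using even_weight_bound[OF Q _ w(2)] w
      by (simp add: R'[symmetric] R_def x_def f_def w_eq algebra_simps of_nat_diff)
    then have "R * ((x ^ v + x * f) * (x^2 * x ^ v + x * (f + 2 * Q))) \<le> (R + Q + 2) * (x * x ^ v - x * (f + Q))^2"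
      using \<open>x \<ge> 0\<close> \<open>x ^ v \<ge> 0\<close> \<open>R \<ge> 0\<close> Q by (intro log_concave_step_even_weight) auto
    then show ?thesis
      using False unfolding E R' R_def[symmetric] by simp
  qed
qed

lemma scaled_support_count_0_to_4:
  "scaled_support_count Q 0 = Q^2"
  "scaled_support_count Q 1 = 0"
  "scaled_support_count Q 2 = 0"
  "scaled_support_count Q 3 = Q^2 * (Q - 1)"
  "scaled_support_count Q 4 = Q^2 * ((Q - 1) * (Q - 3))"
  by (simp_all add: scaled_support_count_def algebra_simps power2_eq_square power3_eq_cube power4_eq_xxxx)

context hamming_code_2
begin

lemma weight_count_0_to_4:
  "weight_count (parity_code 2 H) 0 = 1"
  "weight_count (parity_code 2 H) 1 = 0"
  "weight_count (parity_code 2 H) 2 = 0"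
  "int (weight_count (parity_code 2 H) 3) = int ((CARD('a) + 1) choose 3) * (int CARD('a) - 1)"
  "int (weight_count (parity_code 2 H) 4) = int ((CARD('a) + 1) choose 4) * ((int CARD('a) - 1) * (int CARD('a) - 3))"
  using weight_count_formula[of 0] weight_count_formula[of 1] weight_count_formula[of 2] weight_count_formula[of 3]
    weight_count_formula[of 4] card_field_ge_2[where 'a='a]
  unfolding scaled_support_count_0_to_4 by (simp_all add: mult.assoc)

lemma weight_count_pos:
  assumes "CARD('a) \<ge> 4" and "3 \<le> w" "w \<le> CARD('a) + 1"
  shows "weight_count (parity_code 2 H) w > 0"
proof -
  have "scaled_support_count (int CARD('a)) w > 0"
    using assms by (intro scaled_support_count_pos) auto
  moreover have "int ((CARD('a) + 1) choose w) > 0"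
    using assms by simp
  ultimately have "int (weight_count (parity_code 2 H) w) * int CARD('a) ^ 2 > 0"
    using weight_count_formula[of w] by simp
  then show ?thesis
    by (simp add: zero_less_mult_iff)
qed

lemma weight_count_4_le_square_3:
  assumes "CARD('a) \<ge> 5"
  shows "weight_count (parity_code 2 H) 4 \<le> weight_count (parity_code 2 H) 3 ^ 2"
proof -
  define Q where "Q = int CARD('a)"
  define c3 where "c3 = int ((CARD('a) + 1) choose 3)"
  have "4 * ((CARD('a) + 1) choose 4) = (CARD('a) - 2) * ((CARD('a) + 1) choose 3)"
    using Suc_times_binomial_diff[of 3 "CARD('a) + 1"] by (simp add: numeral_eq_Suc)
  then have "int (4 * ((CARD('a) + 1) choose 4)) = int (CARD('a) - 2) * c3"
    by (simp only: c3_def of_nat_mult)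
  then have c4: "4 * int ((CARD('a) + 1) choose 4) = (Q - 2) * c3"
    using assms by (simp add: Q_def of_nat_diff)
  have "CARD('a) + 1 \<le> (CARD('a) + 1) choose 3"
    using binomial_mono[of 1 3 "CARD('a) + 1"] assms by simp
  then have "Q - 2 \<le> c3"
    by (simp add: Q_def c3_def)
  have "4 * int (weight_count (parity_code 2 H) 4) = 4 * int ((CARD('a) + 1) choose 4) * ((Q - 1) * (Q - 3))"
    by (simp add: weight_count_0_to_4 Q_def)
  also have "\<dots> = c3 * (Q - 1) * ((Q - 2) * (Q - 3))"
    unfolding c4 by (simp add: algebra_simps)
  also have "\<dots> \<le> c3 * (Q - 1) * (c3 * (4 * (Q - 1)))"
  proof -
    have "Q \<ge> 5"
      using assms by (simp add: Q_def)
    then have "(Q - 2) * (Q - 3) \<le> c3 * (4 * (Q - 1))"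
      using \<open>Q - 2 \<le> c3\<close> by (intro mult_mono) auto
    then show ?thesis
      using \<open>Q \<ge> 5\<close> \<open>Q - 2 \<le> c3\<close> by (intro mult_left_mono) auto
  qed
  also have "\<dots> = 4 * int (weight_count (parity_code 2 H) 3 ^ 2)"
    by (simp add: weight_count_0_to_4 Q_def c3_def power2_eq_square)
  finally show ?thesis
    by simp
qed

lemma weight_count_log_concave:
  assumes q: "CARD('a) \<ge> 9" and w: "4 \<le> w" "w \<le> CARD('a)"
  shows "weight_count (parity_code 2 H) (w - 1) * weight_count (parity_code 2 H) (w + 1)
    \<le> weight_count (parity_code 2 H) w ^ 2"
proof -
  define Q where "Q = int CARD('a)"
  define A where "A = (\<lambda>k. int (weight_count (parity_code 2 H) k))"
  define c where "c = (\<lambda>k. int ((CARD('a) + 1) choose k))"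
  define E where "E = scaled_support_count Q"
  define D where "D = (Q + 2 - int w) * (int w + 1)"
  have A: "A k * Q^2 = c k * E k" for k
    using weight_count_formula[of k] by (simp add: A_def c_def E_def Q_def)
  have ratio: "c (w - 1) * c (w + 1) * D = c w ^ 2 * (int w * (Q + 1 - int w))"
    using binomial_neighbours_ratio[of w "CARD('a) + 1"] w by (simp add: c_def D_def Q_def ac_simps)
  have "D > 0"
    using w by (simp add: D_def Q_def)
  have "A (w - 1) * A (w + 1) * Q^4 * D = c (w - 1) * c (w + 1) * D * (E (w - 1) * E (w + 1))"
    using A[of "w - 1"] A[of "w + 1"] by (simp add: algebra_simps power4_eq_xxxx power2_eq_square)
  also have "\<dots> = c w ^ 2 * (int w * (Q + 1 - int w) * (E (w - 1) * E (w + 1)))"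
    unfolding ratio by (simp only: mult.assoc)
  also have "\<dots> \<le> c w ^ 2 * ((int w + 1) * (Q + 2 - int w) * E w ^ 2)"
    using scaled_support_count_log_concave[of Q w] q w by (intro mult_left_mono) (auto simp: E_def Q_def)
  also have "\<dots> = (c w * E w) ^ 2 * D"
    by (simp add: D_def power_mult_distrib ac_simps)
  also have "\<dots> = A w ^ 2 * Q^4 * D"
    by (simp add: A[symmetric] power_mult_distrib power4_eq_xxxx power2_eq_square)
  finally have "A (w - 1) * A (w + 1) * (Q^4 * D) \<le> A w ^ 2 * (Q^4 * D)"
    by (simp add: mult.assoc)
  moreover have "Q^4 * D > 0"
    using \<open>D > 0\<close> q by (simp add: Q_def)
  ultimately have "A (w - 1) * A (w + 1) \<le> A w ^ 2"
    by (simp add: mult_le_cancel_right_pos)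
  then show ?thesis
    unfolding A_def by (simp only: of_nat_mult[symmetric] of_nat_power[symmetric] of_nat_le_iff)
qed

end

lemma log_concave_nonzero_filter_gap:
  fixes A :: "nat \<Rightarrow> nat"
  assumes "3 \<le> n" and "A 0 \<noteq> 0" "A 1 = 0" "A 2 = 0" and nonzero: "\<And>w. 3 \<le> w \<Longrightarrow> w \<le> n \<Longrightarrow> A w \<noteq> 0"
    and first: "A 0 * A 4 \<le> A 3 ^ 2"
    and later: "\<And>w. 4 \<le> w \<Longrightarrow> w < n \<Longrightarrow> A (w - 1) * A (w + 1) \<le> A w ^ 2"
  shows "let a = filter (\<lambda>x. x \<noteq> 0) (map A [0..<Suc n]) in
    \<forall>i. 1 \<le> i \<and> i + 1 < length a \<longrightarrow> a ! (i - 1) * a ! (i + 1) \<le> (a ! i)^2"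
proof -
  have "[0..<Suc n] = [0, 1, 2] @ [3..<Suc n]"
    using assms(1) upt_add_eq_append[of 0 3 "n - 2"] by (simp add: upt_rec)
  moreover have "filter (\<lambda>x. x \<noteq> 0) (map A [3..<Suc n]) = map A [3..<Suc n]"
    using nonzero by (auto intro: filter_True)
  ultimately have a: "filter (\<lambda>x. x \<noteq> 0) (map A [0..<Suc n]) = A 0 # map A [3..<Suc n]"
    using assms(2-4) by simp
  have a_nth: "(A 0 # map A [3..<Suc n]) ! j = A (j + 2)" if "1 \<le> j" "j < n - 1" for j
    using that by (cases j) (simp_all del: upt_Suc add: numeral_eq_Suc)
  show ?thesis
    unfolding a Let_def
  proof (intro allI impI)
    fix i assume i: "1 \<le> i \<and> i + 1 < length (A 0 # map A [3..<Suc n])"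
    show "(A 0 # map A [3..<Suc n]) ! (i - 1) * (A 0 # map A [3..<Suc n]) ! (i + 1)
        \<le> ((A 0 # map A [3..<Suc n]) ! i)^2"
    proof (cases "i = 1")
      case True
      with i have "(A 0 # map A [3..<Suc n]) ! 1 = A 3" "(A 0 # map A [3..<Suc n]) ! 2 = A 4"
        using a_nth[of 1] a_nth[of 2] by (simp_all del: upt_Suc)
      then show ?thesis
        using first True by (simp del: upt_Suc)
    next
      case False
      have "length (A 0 # map A [3..<Suc n]) = n - 1"
        using assms(1) by (simp del: upt_Suc)
      with i False have "2 \<le> i" and "i + 2 < n"
        by linarith+
      then have "(A 0 # map A [3..<Suc n]) ! (i - 1) = A (i + 2 - 1)"
        "(A 0 # map A [3..<Suc n]) ! i = A (i + 2)" "(A 0 # map A [3..<Suc n]) ! (i + 1) = A (i + 2 + 1)"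
        using a_nth[of "i - 1"] a_nth[of i] a_nth[of "i + 1"] by (simp_all del: upt_Suc)
      then show ?thesis
        using later[of "i + 2"] \<open>2 \<le> i\<close> \<open>i + 2 < n\<close> by (simp del: upt_Suc)
    qed
  qed
qed

theorem mainTheorem8:
  fixes H :: "'a::{finite,field} list list"
  assumes "card (UNIV :: 'a set) \<ge> 9"
    and "is_hamming_pcm 2 H"
  shows "log_concave_code (length H) (parity_code 2 H)"
proof -
  interpret hamming_code_2 H
    by unfold_locales (rule assms(2))
  have q: "CARD('a) \<ge> 9"
    using assms(1) by simp
  show ?thesis
    unfolding log_concave_code_def nonzero_weight_distr_def length_hamming
  proof (rule log_concave_nonzero_filter_gap)
    show "3 \<le> CARD('a) + 1"
      using q by simp
    show "weight_count (parity_code 2 H) 0 \<noteq> 0" "weight_count (parity_code 2 H) 1 = 0"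
      "weight_count (parity_code 2 H) 2 = 0"
      by (simp_all only: weight_count_0_to_4)
    show "\<And>w. 3 \<le> w \<Longrightarrow> w \<le> CARD('a) + 1 \<Longrightarrow> weight_count (parity_code 2 H) w \<noteq> 0"
      using q weight_count_pos by fastforce
    show "weight_count (parity_code 2 H) 0 * weight_count (parity_code 2 H) 4
        \<le> weight_count (parity_code 2 H) 3 ^ 2"
      using q weight_count_4_le_square_3 by (simp add: weight_count_0_to_4)
    show "\<And>w. 4 \<le> w \<Longrightarrow> w < CARD('a) + 1 \<Longrightarrow>
        weight_count (parity_code 2 H) (w - 1) * weight_count (parity_code 2 H) (w + 1)
        \<le> weight_count (parity_code 2 H) w ^ 2"
      using q weight_count_log_concave by simp
  qed
qed

end
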